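(* Let $V$ be a vector space over a field $\mathbb{F}$, let $u\in\mathrm{End}(V)$ and $a\in\mathbb{F}$. Assume that $V^u$ has a stratification satisfying properties (PA) and (PM). Then there exists an endomorphism $v$ of $V$ such that $v^2=av$ and $u-v$ is elementary.
   Context: For $u\in\mathrm{End}(V)$, $V^u$ is the $\mathbb{F}[t]$-module with underlying space $V$ and $t\cdot x:=u(x)$; $u$ is elementary if $V^u$ is a free $\mathbb{F}[t]$-module. A stratification of a non-zero $\mathbb{F}[t]$-module $M$ is an increasing family $(M_\alpha)_{\alpha\in D}$ of submodules indexed by a well-ordered set $D$ such that for each $\alpha\in D$ the quotient $M_\alpha/\sum_{\beta<\alpha}M_\beta$ is non-zero and monogenous (cyclic), and $M=\sum_{\alpha\in D}M_\alpha$. Its dimension sequence is $n_\alpha:=\dim_{\mathbb{F}}\bigl(M_\alpha/\sum_{\beta<\alpha}M_\beta\bigr)\in\mathbb{N}^*\cup\{+\infty\}$. Property (PA): $n_\alpha\ge 2$ whenever $\alpha$ is the successor (least strictly greater element) of some element of $D$. Property (PM): $D$ has no maximum. *)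

theory Defs
  imports Complex_Main "HOL-Library.Extended_Nat"
begin

text \<open>A vector space V over a field F is modelled as the whole type 'v with a
scalar multiplication scale satisfying the locale vector_space.
For an endomorphism u, submodules of the F[t]-module V^u are the u-invariant
subspaces; the sum of a family of submodules is the span of their union.\<close>

definition lower_sum ::
  "('f::field \<Rightarrow> 'v::ab_group_add \<Rightarrow> 'v) \<Rightarrow> ('d::wellorder \<Rightarrow> 'v set) \<Rightarrow> 'd \<Rightarrow> 'v set" where
  "lower_sum scale M \<alpha> = module.span scale (\<Union>\<beta>\<in>{..<\<alpha>}. M \<beta>)"

text \<open>F-dimension of the quotient W/N (N a subspace of W): supremum of the sizes
of finite subsets of W that are linearly independent modulo N.\<close>
definition quot_dim ::
  "('f::field \<Rightarrow> 'v::ab_group_add \<Rightarrow> 'v) \<Rightarrow> 'v set \<Rightarrow> 'v set \<Rightarrow> enat" where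
  "quot_dim scale W N =
     (SUP B \<in> {B. finite B \<and> B \<subseteq> W \<and> \<not> module.dependent scale B
                 \<and> module.span scale B \<inter> N = {0}}. enat (card B))"

definition stratification ::
  "('f::field \<Rightarrow> 'v::ab_group_add \<Rightarrow> 'v) \<Rightarrow> ('v \<Rightarrow> 'v) \<Rightarrow> ('d::wellorder \<Rightarrow> 'v set) \<Rightarrow> bool" where
  "stratification scale u M \<longleftrightarrow>
     (\<forall>\<alpha>. module.subspace scale (M \<alpha>) \<and> u ` M \<alpha> \<subseteq> M \<alpha>) \<and>
     mono M \<and>
     (\<forall>\<alpha>. \<not> M \<alpha> \<subseteq> lower_sum scale M \<alpha> \<and>
          (\<exists>x\<in>M \<alpha>. M \<alpha> = module.span scale (lower_sum scale M \<alpha> \<union> range (\<lambda>k. (u ^^ k) x)))) \<and>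
     module.span scale (\<Union>\<alpha>. M \<alpha>) = UNIV"

definition strat_dim ::
  "('f::field \<Rightarrow> 'v::ab_group_add \<Rightarrow> 'v) \<Rightarrow> ('d::wellorder \<Rightarrow> 'v set) \<Rightarrow> 'd \<Rightarrow> enat" where
  "strat_dim scale M \<alpha> = quot_dim scale (M \<alpha>) (lower_sum scale M \<alpha>)"

definition is_successor :: "'d::wellorder \<Rightarrow> 'd \<Rightarrow> bool" where
  "is_successor \<alpha> \<beta> \<longleftrightarrow> \<beta> < \<alpha> \<and> \<not> (\<exists>\<gamma>. \<beta> < \<gamma> \<and> \<gamma> < \<alpha>)"

definition property_PA ::
  "('f::field \<Rightarrow> 'v::ab_group_add \<Rightarrow> 'v) \<Rightarrow> ('d::wellorder \<Rightarrow> 'v set) \<Rightarrow> bool" where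
  "property_PA scale M \<longleftrightarrow> (\<forall>\<alpha> \<beta>. is_successor \<alpha> \<beta> \<longrightarrow> strat_dim scale M \<alpha> \<ge> 2)"

definition property_PM :: "('d::wellorder \<Rightarrow> 'v set) \<Rightarrow> bool" where
  "property_PM M \<longleftrightarrow> (\<forall>\<alpha>::'d. \<exists>\<beta>. \<alpha> < \<beta>)"

text \<open>w is elementary iff V^w is a free F[t]-module: there is B such that the
vectors w^k b (k in nat, b in B) are pairwise distinct and form an F-basis of V.\<close>
definition elementary ::
  "('f::field \<Rightarrow> 'v::ab_group_add \<Rightarrow> 'v) \<Rightarrow> ('v \<Rightarrow> 'v) \<Rightarrow> bool" where
  "elementary scale w \<longleftrightarrow>
     (\<exists>B. inj_on (\<lambda>(k, b). (w ^^ k) b) (UNIV \<times> B) \<and>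
          \<not> module.dependent scale ((\<lambda>(k, b). (w ^^ k) b) ` (UNIV \<times> B)) \<and>
          module.span scale ((\<lambda>(k, b). (w ^^ k) b) ` (UNIV \<times> B)) = UNIV)"

end

theory Submission
  imports Defs "HOL-Library.Product_Lexorder"
begin

text \<open>
  Let \<open>x\<^sub>\<alpha>\<close> generate the cyclic quotient \<open>M\<^sub>\<alpha> / L\<^sub>\<alpha>\<close> of dimension \<open>n\<^sub>\<alpha>\<close>. The vectors
  \<open>e(\<alpha>, k) = u\<^sup>k x\<^sub>\<alpha>\<close> with \<open>k < n\<^sub>\<alpha>\<close> form a basis of \<open>V\<close> which is triangular for the
  lexicographic order, and \<open>u\<close> maps \<open>e(\<alpha>, k)\<close> to the next basis vector \<open>e(\<alpha>, k + 1)\<close>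
  except at the end of a block, where \<open>u e(\<alpha>, n\<^sub>\<alpha> - 1)\<close> lies in \<open>M\<^sub>\<alpha>\<close>. Let \<open>v\<close> vanish
  on all basis vectors except \<open>v e(\<alpha>, n\<^sub>\<alpha> - 1) = a e(\<alpha>, n\<^sub>\<alpha> - 1) - e(\<alpha>\<^sup>+, 0)\<close>, where
  \<open>\<alpha>\<^sup>+\<close> exists by (PM). Then \<open>u - v\<close> sends every basis vector to the next one in the
  order modulo earlier ones, so along the chains of the successor map it is a
  unitriangular perturbation of a shift, hence elementary. By (PA) the block of \<open>\<alpha>\<^sup>+\<close> has
  at least two vectors, so \<open>v e(\<alpha>\<^sup>+, 0) = 0\<close>, which gives \<open>v\<^sup>2 = a v\<close>.
\<close>

definition triangular ::
  "('f::field \<Rightarrow> 'v::ab_group_add \<Rightarrow> 'v) \<Rightarrow> 'i::linorder set \<Rightarrow> ('i \<Rightarrow> 'v) \<Rightarrow> bool" where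
  "triangular scale I e \<longleftrightarrow> (\<forall>i\<in>I. e i \<notin> module.span scale (e ` {j\<in>I. j < i}))"

context vector_space
begin

lemma triangular_inj_on:
  assumes "triangular scale I e"
  shows "inj_on e I"
proof -
  have False if "i \<in> I" "j \<in> I" "i < j" "e i = e j" for i j
  proof -
    have "e j \<in> span (e ` {k\<in>I. k < j})"
      using that by (intro span_base) (auto intro!: image_eqI[of _ e i])
    then show False using assms that(2) unfolding triangular_def by blast
  qed
  then show ?thesis by (metis inj_onI linorder_neqE)
qed

lemma triangular_independent:
  assumes "triangular scale I e"
  shows "independent (e ` I)"
proof -
  have finite_indep: "independent (e ` J)" if "finite J" "J \<subseteq> I" for J
    using that
  proof (induction J rule: finite_linorder_max_induct)
    case (insert b J)
    then have "e ` J \<subseteq> e ` {j\<in>I. j < b}" by auto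
    then have "span (e ` J) \<subseteq> span (e ` {j\<in>I. j < b})" by (rule span_mono)
    then have "e b \<notin> span (e ` J)"
      using assms insert.prems unfolding triangular_def by blast
    then show ?case using insert by (simp add: independent_insertI)
  qed (simp add: independent_empty)
  show ?thesis
    unfolding independent_explicit_finite_subsets[of "e ` I"]
  proof (rule allI, intro impI)
    fix S assume S: "S \<subseteq> e ` I" "finite S"
    then obtain J where "J \<subseteq> I" "finite J" "S = e ` J" by (meson finite_subset_image)
    then have "independent S" using finite_indep by blast
    then show "\<forall>c. (\<Sum>v\<in>S. c v *s v) = 0 \<longrightarrow> (\<forall>v\<in>S. c v = 0)"
      using independent_explicit_finite_subsets[of S] S by blast
  qed
qed

lemma unitriangular_change_initial_spans:
  fixes e g :: "'i::wellorder \<Rightarrow> 'b"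
  assumes g: "\<And>i. i \<in> I \<Longrightarrow> g i - e i \<in> span (e ` {j\<in>I. j < i})" and "i \<in> I"
  shows "g i \<in> span (e ` {j\<in>I. j \<le> i})" and "e i \<in> span (g ` {j\<in>I. j \<le> i})"
proof -
  have "span (e ` {j\<in>I. j < i}) \<subseteq> span (e ` {j\<in>I. j \<le> i})"
    by (intro span_mono image_mono) auto
  then have "g i - e i \<in> span (e ` {j\<in>I. j \<le> i})" using g[OF \<open>i \<in> I\<close>] by blast
  moreover have "e i \<in> span (e ` {j\<in>I. j \<le> i})"
    using \<open>i \<in> I\<close> by (intro span_base) auto
  ultimately show "g i \<in> span (e ` {j\<in>I. j \<le> i})" using span_add by fastforce
  show "e i \<in> span (g ` {j\<in>I. j \<le> i})"
    using \<open>i \<in> I\<close>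
  proof (induction i rule: less_induct)
    case (less i)
    have "e j \<in> span (g ` {j\<in>I. j \<le> i})" if "j \<in> I" "j < i" for j
    proof -
      have "span (g ` {k\<in>I. k \<le> j}) \<subseteq> span (g ` {k\<in>I. k \<le> i})"
        using that by (intro span_mono image_mono) auto
      then show ?thesis using less.IH[OF that(2,1)] by blast
    qed
    then have "span (e ` {j\<in>I. j < i}) \<subseteq> span (g ` {j\<in>I. j \<le> i})"
      by (intro span_minimal) auto
    then have "g i - e i \<in> span (g ` {j\<in>I. j \<le> i})" using g less.prems by blast
    moreover have "g i \<in> span (g ` {j\<in>I. j \<le> i})" using less.prems by (intro span_base) auto
    ultimately show ?case using span_diff by fastforce
  qed
qed

lemma triangular_perturb:
  fixes e g :: "'i::wellorder \<Rightarrow> 'b"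
  assumes e: "triangular scale I e"
    and g: "\<And>i. i \<in> I \<Longrightarrow> g i - e i \<in> span (e ` {j\<in>I. j < i})"
  shows "triangular scale I g" and "span (g ` I) = span (e ` I)"
proof -
  have g_le: "g i \<in> span (e ` {j\<in>I. j \<le> i})" if "i \<in> I" for i
    using g that by (rule unitriangular_change_initial_spans(1))
  have e_le: "e i \<in> span (g ` {j\<in>I. j \<le> i})" if "i \<in> I" for i
    using g that by (rule unitriangular_change_initial_spans(2))
  show "triangular scale I g"
    unfolding triangular_def
  proof (intro ballI notI)
    fix i assume i: "i \<in> I" and "g i \<in> span (g ` {j\<in>I. j < i})"
    moreover have "g j \<in> span (e ` {j\<in>I. j < i})" if "j \<in> I" "j < i" for j
    proof -
      have "span (e ` {k\<in>I. k \<le> j}) \<subseteq> span (e ` {k\<in>I. k < i})"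
        using that by (intro span_mono image_mono) auto
      then show ?thesis using g_le[OF that(1)] by blast
    qed
    then have "span (g ` {j\<in>I. j < i}) \<subseteq> span (e ` {j\<in>I. j < i})"
      by (intro span_minimal) auto
    ultimately have "g i - (g i - e i) \<in> span (e ` {j\<in>I. j < i})"
      using g[OF i] span_diff by blast
    then show False using e i unfolding triangular_def by simp
  qed
  show "span (g ` I) = span (e ` I)"
  proof (rule span_eq[THEN iffD2], intro conjI subsetI)
    fix y assume "y \<in> g ` I"
    then obtain i where i: "i \<in> I" "y = g i" by blast
    have "span (e ` {j\<in>I. j \<le> i}) \<subseteq> span (e ` I)" by (intro span_mono image_mono) auto
    then show "y \<in> span (e ` I)" using g_le i by blast
  next
    fix y assume "y \<in> e ` I"
    then obtain i where i: "i \<in> I" "y = e i" by blast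
    have "span (g ` {j\<in>I. j \<le> i}) \<subseteq> span (g ` I)" by (intro span_mono image_mono) auto
    then show "y \<in> span (g ` I)" using e_le i by blast
  qed
qed

end

lemma bij_betw_funpow_orbits:
  fixes s :: "'i::wellorder \<Rightarrow> 'i"
  assumes maps: "s ` I \<subseteq> I" and inj: "inj_on s I" and incr: "\<And>i. i \<in> I \<Longrightarrow> i < s i"
  shows "bij_betw (\<lambda>(k, b). (s ^^ k) b) (UNIV \<times> (I - s ` I)) I"
proof -
  have in_I: "(s ^^ k) b \<in> I" if "b \<in> I" for k b
    using that maps by (induction k) auto
  have unique: "k = m \<and> b = c"
    if "b \<in> I - s ` I" "c \<in> I - s ` I" "(s ^^ k) b = (s ^^ m) c" for k m b c
    using that
  proof (induction k arbitrary: m)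
    case 0
    then show ?case using in_I by (cases m) auto
  next
    case (Suc k)
    show ?case
    proof (cases m)
      case 0
      then show ?thesis using Suc.prems in_I by auto
    next
      case (Suc m')
      then have "(s ^^ k) b = (s ^^ m') c"
        using Suc.prems in_I inj by (auto dest: inj_onD)
      then show ?thesis using Suc.IH Suc.prems \<open>m = Suc m'\<close> by blast
    qed
  qed
  have cover: "i \<in> (\<lambda>(k, b). (s ^^ k) b) ` (UNIV \<times> (I - s ` I))" if "i \<in> I" for i
    using that
  proof (induction i rule: less_induct)
    case (less i)
    show ?case
    proof (cases "i \<in> s ` I")
      case True
      then obtain j where j: "j \<in> I" "i = s j" by blast
      then have "j < i" using incr by blast
      then obtain k b where "b \<in> I - s ` I" "j = (s ^^ k) b" using less.IH j by fastforce
      then show ?thesis using j by (auto intro!: image_eqI[of _ _ "(Suc k, b)"])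
    next
      case False
      then show ?thesis using less.prems by (auto intro!: image_eqI[of _ _ "(0, i)"])
    qed
  qed
  have "inj_on (\<lambda>(k, b). (s ^^ k) b) (UNIV \<times> (I - s ` I))"
    by (rule inj_onI) (use unique in auto)
  moreover have "(\<lambda>(k, b). (s ^^ k) b) ` (UNIV \<times> (I - s ` I)) = I"
    using cover in_I by fastforce
  ultimately show ?thesis unfolding bij_betw_def ..
qed

context vector_space
begin

lemma elementary_if_orbits_triangular:
  fixes \<Phi> :: "nat \<times> 'c \<Rightarrow> 'i::linorder"
  assumes \<Phi>: "bij_betw \<Phi> (UNIV \<times> R) I"
    and g: "triangular scale I g" "span (g ` I) = UNIV"
    and orbit: "\<And>k b. b \<in> R \<Longrightarrow> g (\<Phi> (k, b)) = (w ^^ k) (f b)"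
  shows "elementary scale w"
proof -
  let ?orbit = "\<lambda>(k, b). (w ^^ k) b"
  have orbit_\<Phi>: "(?orbit \<circ> apsnd f) p = (g \<circ> \<Phi>) p" if "p \<in> UNIV \<times> R" for p
    using that orbit by (cases p) simp
  have domain: "UNIV \<times> f ` R = apsnd f ` (UNIV \<times> R)"
    unfolding apsnd_def by (rule map_prod_surj_on[symmetric]) simp_all
  have "inj_on (g \<circ> \<Phi>) (UNIV \<times> R)"
    using bij_betw_imp_inj_on[OF \<Phi>] triangular_inj_on[OF g(1)]
    unfolding bij_betw_imp_surj_on[OF \<Phi>, symmetric] by (rule comp_inj_on)
  then have "inj_on (?orbit \<circ> apsnd f) (UNIV \<times> R)"
    by (simp only: inj_on_cong[OF orbit_\<Phi>])
  then have "inj_on ?orbit (UNIV \<times> f ` R)"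
    unfolding domain by (rule inj_on_imageI)
  moreover have "?orbit ` (UNIV \<times> f ` R) = g ` I"
  proof -
    have "?orbit ` (UNIV \<times> f ` R) = (?orbit \<circ> apsnd f) ` (UNIV \<times> R)"
      unfolding domain by (rule image_comp)
    also have "\<dots> = g ` \<Phi> ` (UNIV \<times> R)"
      unfolding image_comp using orbit_\<Phi> by (rule image_cong[OF refl])
    also have "\<dots> = g ` I" using \<Phi> by (simp add: bij_betw_def)
    finally show ?thesis .
  qed
  ultimately show ?thesis
    unfolding elementary_def using triangular_independent[OF g(1)] g(2)
    by (intro exI[of _ "f ` R"]) simp
qed

lemma funpow_shift_triangular:
  fixes e :: "'i::wellorder \<Rightarrow> 'b" and s :: "'i \<Rightarrow> 'i"
  assumes linear_w: "Vector_Spaces.linear scale scale w"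
    and s_maps: "s ` I \<subseteq> I" and s_mono: "strict_mono_on I s"
    and shift: "\<And>i. i \<in> I \<Longrightarrow> w (e i) - e (s i) \<in> span (e ` {j\<in>I. j < s i})"
    and "b \<in> I"
  shows "(w ^^ k) (e b) - e ((s ^^ k) b) \<in> span (e ` {j\<in>I. j < (s ^^ k) b})"
proof -
  interpret w: Vector_Spaces.linear scale scale w by (rule linear_w)
  define below where "below i = span (e ` {j\<in>I. j < i})" for i
  have w_below: "w ` below i \<subseteq> below (s i)" if "i \<in> I" for i
  proof -
    have "w (e j) \<in> below (s i)" if "j \<in> I" "j < i" for j
    proof -
      have "s j < s i" using s_mono that \<open>i \<in> I\<close> by (simp add: strict_mono_on_def)
      then have "below (s j) \<subseteq> below (s i)"
        unfolding below_def by (intro span_mono image_mono) auto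
      then have "w (e j) - e (s j) \<in> below (s i)" using shift[OF that(1), folded below_def] by blast
      moreover have "e (s j) \<in> below (s i)"
        unfolding below_def using \<open>s j < s i\<close> s_maps that(1) by (intro span_base) auto
      ultimately have "(w (e j) - e (s j)) + e (s j) \<in> below (s i)"
        unfolding below_def by (rule span_add)
      then show ?thesis by simp
    qed
    then have "w ` e ` {j\<in>I. j < i} \<subseteq> below (s i)" by auto
    then show ?thesis unfolding below_def w.span_image[symmetric] by (intro span_minimal) auto
  qed
  show ?thesis
    unfolding below_def[symmetric]
  proof (induction k)
    case 0
    then show ?case by (simp add: below_def span_zero)
  next
    case (Suc k)
    define i where "i = (s ^^ k) b"
    have "i \<in> I" unfolding i_def using \<open>b \<in> I\<close> s_maps by (induction k) auto
    define r where "r = (w ^^ k) (e b) - e i"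
    have "w r \<in> below (s i)" using w_below[OF \<open>i \<in> I\<close>] Suc.IH unfolding r_def i_def by blast
    have "(w ^^ Suc k) (e b) - e ((s ^^ Suc k) b) = (w (e i) - e (s i)) + w r"
      unfolding r_def i_def by (simp add: w.diff)
    also have "\<dots> \<in> below (s i)"
      using shift[OF \<open>i \<in> I\<close>] \<open>w r \<in> below (s i)\<close> unfolding below_def by (intro span_add)
    finally show ?case unfolding i_def by simp
  qed
qed

lemma elementary_if_shifts_triangular_basis:
  fixes e :: "'i::wellorder \<Rightarrow> 'b" and s :: "'i \<Rightarrow> 'i"
  assumes linear_w: "Vector_Spaces.linear scale scale w"
    and triangular: "triangular scale I e" and spanning: "span (e ` I) = UNIV"
    and s_maps: "s ` I \<subseteq> I" and s_mono: "strict_mono_on I s" and s_incr: "\<And>i. i \<in> I \<Longrightarrow> i < s i"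
    and shift: "\<And>i. i \<in> I \<Longrightarrow> w (e i) - e (s i) \<in> span (e ` {j\<in>I. j < s i})"
  shows "elementary scale w"
proof -
  define R where "R = I - s ` I"
  define \<Phi> :: "nat \<times> 'i \<Rightarrow> 'i" where "\<Phi> = (\<lambda>(k, b). (s ^^ k) b)"
  have \<Phi>: "bij_betw \<Phi> (UNIV \<times> R) I"
    unfolding \<Phi>_def R_def using s_maps strict_mono_on_imp_inj_on[OF s_mono] s_incr
    by (rule bij_betw_funpow_orbits)
  define g where "g i = (case inv_into (UNIV \<times> R) \<Phi> i of (k, b) \<Rightarrow> (w ^^ k) (e b))" for i
  have orbit: "g (\<Phi> (k, b)) = (w ^^ k) (e b)" if "b \<in> R" for k b
    using bij_betw_inv_into_left[OF \<Phi>, of "(k, b)"] that unfolding g_def by simp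
  have "g i - e i \<in> span (e ` {j\<in>I. j < i})" if "i \<in> I" for i
  proof -
    have "i \<in> \<Phi> ` (UNIV \<times> R)" using \<open>i \<in> I\<close> \<Phi> by (simp add: bij_betw_def)
    then obtain k b where "b \<in> R" "i = \<Phi> (k, b)" by blast
    then show ?thesis
      using orbit funpow_shift_triangular[OF linear_w s_maps s_mono shift, of b k]
      unfolding \<Phi>_def R_def by simp
  qed
  then have "triangular scale I g" and "span (g ` I) = UNIV"
    using triangular_perturb[OF triangular, of g] spanning by simp_all
  then show ?thesis by (rule elementary_if_orbits_triangular[OF \<Phi> _ _ orbit])
qed

end

definition fresh_iterate ::
  "('f::field \<Rightarrow> 'v::ab_group_add \<Rightarrow> 'v) \<Rightarrow> ('v \<Rightarrow> 'v) \<Rightarrow> 'v set \<Rightarrow> 'v \<Rightarrow> nat \<Rightarrow> bool" where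
  "fresh_iterate scale u L x k \<longleftrightarrow>
     (u ^^ k) x \<notin> module.span scale (L \<union> (\<lambda>m. (u ^^ m) x) ` {..<k})"

lemma quot_dim_mono: "W \<subseteq> W' \<Longrightarrow> quot_dim scale W N \<le> quot_dim scale W' N"
  unfolding quot_dim_def by (rule SUP_subset_mono) auto

context vector_space
begin

lemma span_iterates_eq_span_fresh:
  "span (L \<union> range (\<lambda>k. (u ^^ k) x)) =
   span (L \<union> (\<lambda>k. (u ^^ k) x) ` {k. fresh_iterate scale u L x k})"
  (is "span (L \<union> range ?x) = ?S")
proof (rule antisym)
  have "?x k \<in> ?S" for k
  proof (induction k rule: less_induct)
    case (less k)
    show ?case
    proof (cases "fresh_iterate scale u L x k")
      case True
      then show ?thesis by (intro span_base) blast
    next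
      case False
      have "L \<union> ?x ` {..<k} \<subseteq> ?S" using less.IH span_superset by fastforce
      then have "span (L \<union> ?x ` {..<k}) \<subseteq> ?S" by (intro span_minimal) auto
      then show ?thesis using False unfolding fresh_iterate_def by blast
    qed
  qed
  then show "span (L \<union> range ?x) \<subseteq> ?S" by (intro span_minimal) (auto intro: span_base)
qed (intro span_mono, auto)

lemma fresh_iterate_downward_closed:
  assumes linear_u: "Vector_Spaces.linear scale scale u" and invariant: "u ` L \<subseteq> L"
    and "fresh_iterate scale u L x k" "m \<le> k"
  shows "fresh_iterate scale u L x m"
proof -
  interpret u: Vector_Spaces.linear scale scale u by (rule linear_u)
  let ?S = "\<lambda>n. span (L \<union> (\<lambda>m. (u ^^ m) x) ` {..<n})"
  have stale_Suc: "\<not> fresh_iterate scale u L x (Suc n)" if "\<not> fresh_iterate scale u L x n" for n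
  proof -
    have "u ((u ^^ m) x) \<in> ?S (Suc n)" if "m < n" for m
    proof -
      have "(u ^^ Suc m) x \<in> ?S (Suc n)"
        using that by (intro span_base UnI2 image_eqI[of _ _ "Suc m"]) auto
      then show ?thesis by simp
    qed
    then have "u ` (L \<union> (\<lambda>m. (u ^^ m) x) ` {..<n}) \<subseteq> ?S (Suc n)"
      using invariant by (auto intro: span_base)
    then have "u ` ?S n \<subseteq> ?S (Suc n)"
      unfolding u.span_image[symmetric] by (intro span_minimal) auto
    moreover have "(u ^^ n) x \<in> ?S n" using that unfolding fresh_iterate_def by blast
    ultimately show ?thesis unfolding fresh_iterate_def by auto
  qed
  show ?thesis
  proof (rule ccontr)
    assume "\<not> fresh_iterate scale u L x m"
    with \<open>m \<le> k\<close> have "\<not> fresh_iterate scale u L x k"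
      by (induction k rule: dec_induct) (simp_all add: stale_Suc)
    with \<open>fresh_iterate scale u L x k\<close> show False by contradiction
  qed
qed

lemma quot_dim_span_insert_le_one:
  assumes "subspace L"
  shows "quot_dim scale (span (insert x L)) L \<le> 1"
  unfolding quot_dim_def
proof (rule SUP_least)
  fix B assume "B \<in> {B. finite B \<and> B \<subseteq> span (insert x L) \<and> independent B \<and> span B \<inter> L = {0}}"
  then have B: "finite B" "B \<subseteq> span (insert x L)" "independent B" "span B \<inter> L = {0}" by auto
  have "b1 = b2" if "b1 \<in> B" "b2 \<in> B" for b1 b2
  proof (rule ccontr)
    assume "b1 \<noteq> b2"
    have "span L = L" using assms by simp
    moreover have "b1 \<in> span (insert x L)" "b2 \<in> span (insert x L)" using that B(2) by auto
    ultimately obtain c1 c2 where c: "b1 - c1 *s x \<in> L" "b2 - c2 *s x \<in> L"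
      unfolding span_breakdown_eq \<open>span L = L\<close> by blast
    have "c2 *s b1 - c1 *s b2 = c2 *s (b1 - c1 *s x) - c1 *s (b2 - c2 *s x)"
      by (simp add: scale_right_diff_distrib)
    also have "\<dots> \<in> L"
      by (rule subspace_diff[OF assms subspace_scale[OF assms c(1)] subspace_scale[OF assms c(2)]])
    finally have "c2 *s b1 - c1 *s b2 \<in> span B \<inter> L"
      using that by (intro IntI span_diff span_scale span_base)
    then have combination: "(\<Sum>v\<in>{b1, b2}. (if v = b1 then c2 else - c1) *s v) = 0"
      using B(4) \<open>b1 \<noteq> b2\<close> by simp
    have "(if b2 = b1 then c2 else - c1) = 0"
      using independentD[OF B(3) _ _ combination, of b2] that by auto
    then have "b1 \<in> span B \<inter> L" using c(1) that \<open>b1 \<noteq> b2\<close> by (auto intro: span_base)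
    then have "b1 = 0" using B(4) by blast
    then show False using B(3) that dependent_zero by blast
  qed
  then have "card B \<le> 1" using card_le_Suc0_iff_eq[OF B(1)] by auto
  then show "enat (card B) \<le> 1" by (simp add: one_enat_def)
qed

lemma fresh_iterate_one_if_quot_dim_ge_two:
  assumes linear_u: "Vector_Spaces.linear scale scale u"
    and L: "subspace L" "u ` L \<subseteq> L"
    and dim: "2 \<le> quot_dim scale (span (L \<union> range (\<lambda>k. (u ^^ k) x))) L"
  shows "fresh_iterate scale u L x 1"
proof (rule ccontr)
  assume "\<not> fresh_iterate scale u L x 1"
  then have "{k. fresh_iterate scale u L x k} \<subseteq> {0}"
    using fresh_iterate_downward_closed[OF linear_u L(2), of x _ 1] by fastforce
  then have "span (L \<union> range (\<lambda>k. (u ^^ k) x)) \<subseteq> span (insert x L)"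
    unfolding span_iterates_eq_span_fresh by (intro span_mono) auto
  then have "quot_dim scale (span (L \<union> range (\<lambda>k. (u ^^ k) x))) L \<le> 1"
    by (rule order_trans[OF quot_dim_mono quot_dim_span_insert_le_one[OF L(1)]])
  with dim have "(2::enat) \<le> 1" by (rule order_trans)
  then show False by simp
qed

end

locale stratified_endomorphism = vector_space scale
  for scale :: "'f::field \<Rightarrow> 'v::ab_group_add \<Rightarrow> 'v" +
  fixes u :: "'v \<Rightarrow> 'v" and M :: "'d::wellorder \<Rightarrow> 'v set"
  assumes linear_u: "Vector_Spaces.linear scale scale u"
    and stratification: "stratification scale u M"
begin

abbreviation L :: "'d \<Rightarrow> 'v set" where "L \<equiv> lower_sum scale M"

lemma M_subspace: "subspace (M \<alpha>)"
  and M_invariant: "u ` M \<alpha> \<subseteq> M \<alpha>"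
  and M_not_subset_L: "\<not> M \<alpha> \<subseteq> L \<alpha>"
  and span_M: "span (\<Union>\<alpha>. M \<alpha>) = UNIV"
  using stratification unfolding stratification_def by simp_all

lemma M_cyclic: "\<exists>x. M \<alpha> = span (L \<alpha> \<union> range (\<lambda>k. (u ^^ k) x))"
  using stratification unfolding stratification_def by blast

lemma L_subspace: "subspace (L \<alpha>)"
  by (simp add: lower_sum_def)

lemma M_subset_L: "\<beta> < \<alpha> \<Longrightarrow> M \<beta> \<subseteq> L \<alpha>"
  unfolding lower_sum_def by (auto intro: span_base)

lemma L_invariant: "u ` L \<alpha> \<subseteq> L \<alpha>"
proof -
  interpret u: Vector_Spaces.linear scale scale u by (rule linear_u)
  have "u ` (\<Union>\<beta>\<in>{..<\<alpha>}. M \<beta>) \<subseteq> L \<alpha>"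
    using M_invariant M_subset_L by blast
  then show ?thesis
    unfolding lower_sum_def u.span_image[symmetric] by (intro span_minimal) auto
qed

definition generator :: "'d \<Rightarrow> 'v" where
  "generator \<alpha> = (SOME x. M \<alpha> = span (L \<alpha> \<union> range (\<lambda>k. (u ^^ k) x)))"

lemma M_eq_span_iterates: "M \<alpha> = span (L \<alpha> \<union> range (\<lambda>k. (u ^^ k) (generator \<alpha>)))"
  unfolding generator_def using M_cyclic by (rule someI_ex)

text \<open>\<open>(\<alpha>, k) \<in> basis_index\<close> iff \<open>k < n\<^sub>\<alpha>\<close>; pairs are ordered lexicographically.\<close>

definition basis_index :: "('d \<times> nat) set" where
  "basis_index = {(\<alpha>, k). fresh_iterate scale u (L \<alpha>) (generator \<alpha>) k}"

definition adapted_basis :: "'d \<times> nat \<Rightarrow> 'v" where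
  "adapted_basis = (\<lambda>(\<alpha>, k). (u ^^ k) (generator \<alpha>))"

lemma adapted_basis_in_M: "adapted_basis (\<alpha>, k) \<in> M \<alpha>"
  unfolding adapted_basis_def by (subst M_eq_span_iterates) (auto intro: span_base)

lemma generator_in_basis_index: "(\<alpha>, 0) \<in> basis_index"
proof -
  have "generator \<alpha> \<notin> L \<alpha>"
  proof
    assume "generator \<alpha> \<in> L \<alpha>"
    then have "(u ^^ k) (generator \<alpha>) \<in> L \<alpha>" for k
      using L_invariant by (induction k) auto
    then have "span (L \<alpha> \<union> range (\<lambda>k. (u ^^ k) (generator \<alpha>))) \<subseteq> L \<alpha>"
      by (intro span_minimal L_subspace) auto
    then show False using M_not_subset_L M_eq_span_iterates by metis
  qed
  moreover have "span (L \<alpha>) = L \<alpha>" using L_subspace by simp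
  ultimately show ?thesis unfolding basis_index_def fresh_iterate_def by (simp del: span_eq_iff)
qed

lemma basis_index_downward_closed: "(\<alpha>, k) \<in> basis_index \<Longrightarrow> m \<le> k \<Longrightarrow> (\<alpha>, m) \<in> basis_index"
  unfolding basis_index_def using fresh_iterate_downward_closed[OF linear_u L_invariant] by blast

lemma M_subset_span_adapted_basis: "M \<alpha> \<subseteq> span (adapted_basis ` {i\<in>basis_index. fst i \<le> \<alpha>})"
proof (induction \<alpha> rule: less_induct)
  case (less \<alpha>)
  let ?S = "span (adapted_basis ` {i\<in>basis_index. fst i \<le> \<alpha>})"
  have "M \<beta> \<subseteq> ?S" if "\<beta> < \<alpha>" for \<beta>
  proof -
    have "span (adapted_basis ` {i\<in>basis_index. fst i \<le> \<beta>}) \<subseteq> ?S"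
      using that by (intro span_mono image_mono) auto
    then show ?thesis using less.IH[OF that] by blast
  qed
  then have "L \<alpha> \<subseteq> ?S" unfolding lower_sum_def by (intro span_minimal) auto
  moreover have "(u ^^ k) (generator \<alpha>) \<in> ?S" if "fresh_iterate scale u (L \<alpha>) (generator \<alpha>) k" for k
  proof -
    have "(\<alpha>, k) \<in> {i\<in>basis_index. fst i \<le> \<alpha>}" using that by (simp add: basis_index_def)
    then show ?thesis by (intro span_base image_eqI[of _ _ "(\<alpha>, k)"]) (simp_all add: adapted_basis_def)
  qed
  ultimately show ?case
    unfolding M_eq_span_iterates[of \<alpha>] span_iterates_eq_span_fresh by (intro span_minimal) auto
qed

lemma triangular_adapted_basis: "triangular scale basis_index adapted_basis"
  unfolding triangular_def
proof (intro ballI)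
  fix i assume "i \<in> basis_index"
  then obtain \<alpha> k where i: "i = (\<alpha>, k)" and fresh: "fresh_iterate scale u (L \<alpha>) (generator \<alpha>) k"
    unfolding basis_index_def by auto
  let ?S = "span (L \<alpha> \<union> (\<lambda>m. (u ^^ m) (generator \<alpha>)) ` {..<k})"
  have "adapted_basis j \<in> ?S" if j: "j \<in> basis_index" "j < i" for j
  proof (cases "fst j < \<alpha>")
    case True
    then have "adapted_basis j \<in> L \<alpha>"
      using adapted_basis_in_M[of "fst j" "snd j"] M_subset_L by auto
    then show ?thesis by (auto intro: span_base)
  next
    case False
    then obtain m where "j = (\<alpha>, m)" "m < k" using j(2) i by (cases j) (auto simp: le_less)
    then show ?thesis unfolding adapted_basis_def by (intro span_base) auto
  qed
  then have "span (adapted_basis ` {j\<in>basis_index. j < i}) \<subseteq> ?S"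
    by (intro span_minimal) auto
  moreover have "adapted_basis i \<notin> ?S"
    using fresh by (simp add: i adapted_basis_def fresh_iterate_def)
  ultimately show "adapted_basis i \<notin> span (adapted_basis ` {j\<in>basis_index. j < i})"
    by blast
qed

lemma span_adapted_basis: "span (adapted_basis ` basis_index) = UNIV"
proof -
  have "M \<alpha> \<subseteq> span (adapted_basis ` basis_index)" for \<alpha>
  proof -
    have "span (adapted_basis ` {i\<in>basis_index. fst i \<le> \<alpha>}) \<subseteq> span (adapted_basis ` basis_index)"
      by (intro span_mono image_mono) auto
    then show ?thesis using M_subset_span_adapted_basis[of \<alpha>] by blast
  qed
  then have "span (\<Union>\<alpha>. M \<alpha>) \<subseteq> span (adapted_basis ` basis_index)"
    by (intro span_minimal) auto
  then show ?thesis using span_M by auto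
qed

end

locale stratified_endomorphism_PA_PM = stratified_endomorphism scale u M
  for scale :: "'f::field \<Rightarrow> 'v::ab_group_add \<Rightarrow> 'v" and u and M :: "'d::wellorder \<Rightarrow> 'v set" +
  assumes PA: "property_PA scale M" and PM: "property_PM M"
begin

definition succ :: "'d \<Rightarrow> 'd" where
  "succ \<alpha> = (LEAST \<beta>. \<alpha> < \<beta>)"

lemma less_succ: "\<alpha> < succ \<alpha>"
  unfolding succ_def using PM unfolding property_PM_def by (metis LeastI)

lemma succ_le: "\<alpha> < \<beta> \<Longrightarrow> succ \<alpha> \<le> \<beta>"
  unfolding succ_def by (rule Least_le)

lemma succ_second_in_basis_index: "(succ \<alpha>, 1) \<in> basis_index"
proof -
  have "is_successor (succ \<alpha>) \<alpha>"
    unfolding is_successor_def using less_succ succ_le leD by blast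
  then have "2 \<le> quot_dim scale (M (succ \<alpha>)) (L (succ \<alpha>))"
    using PA unfolding property_PA_def strat_dim_def by blast
  then show ?thesis
    unfolding basis_index_def M_eq_span_iterates[of "succ \<alpha>"]
    using fresh_iterate_one_if_quot_dim_ge_two[OF linear_u L_subspace L_invariant] by simp
qed

definition next_index :: "'d \<times> nat \<Rightarrow> 'd \<times> nat" where
  "next_index i =
     (if (fst i, Suc (snd i)) \<in> basis_index then (fst i, Suc (snd i)) else (succ (fst i), 0))"

lemma next_index_in_basis_index: "next_index i \<in> basis_index"
  unfolding next_index_def using generator_in_basis_index by auto

lemma less_next_index: "i < next_index i"
  unfolding next_index_def using less_succ by (cases i) auto

lemma next_index_least:
  assumes "j \<in> basis_index" "i < j"
  shows "next_index i \<le> j"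
proof (cases "(fst i, Suc (snd i)) \<in> basis_index")
  case True
  then show ?thesis using assms(2) unfolding next_index_def by (cases i, cases j) auto
next
  case False
  have "fst i < fst j"
  proof (rule ccontr)
    assume "\<not> fst i < fst j"
    then have "fst j = fst i" "Suc (snd i) \<le> snd j" using assms(2) by (cases i, cases j, auto)+
    then show False
      using False basis_index_downward_closed[of "fst j" "snd j"] assms(1) by (cases j) auto
  qed
  then show ?thesis
    using succ_le False unfolding next_index_def by (cases j) (auto simp: le_less)
qed

lemma strict_mono_on_next_index: "strict_mono_on basis_index next_index"
  by (rule strict_mono_onI) (meson next_index_least less_next_index le_less_trans)

definition correction :: "'f \<Rightarrow> 'd \<times> nat \<Rightarrow> 'v" where
  "correction a i =
     (if (fst i, Suc (snd i)) \<in> basis_index then 0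
      else scale a (adapted_basis i) - adapted_basis (succ (fst i), 0))"

lemma linear_extension_of_correction:
  "\<exists>v. Vector_Spaces.linear scale scale v \<and>
       (\<forall>i\<in>basis_index. v (adapted_basis i) = correction a i)"
proof -
  interpret vector_space_pair scale scale ..
  obtain v where "Vector_Spaces.linear scale scale v"
    and "\<forall>b\<in>adapted_basis ` basis_index. v b = correction a (inv_into basis_index adapted_basis b)"
    using linear_independent_extend[OF triangular_independent[OF triangular_adapted_basis],
        of "\<lambda>b. correction a (inv_into basis_index adapted_basis b)"] by blast
  then show ?thesis
    using inv_into_f_f[OF triangular_inj_on[OF triangular_adapted_basis]] by auto
qed

context
  fixes v and a
  assumes linear_v: "Vector_Spaces.linear scale scale v"
    and v_basis: "\<And>i. i \<in> basis_index \<Longrightarrow> v (adapted_basis i) = correction a i"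
begin

interpretation v: Vector_Spaces.linear scale scale v by (rule linear_v)

lemma correction_square: "v \<circ> v = (\<lambda>x. scale a (v x))"
proof
  interpret vector_space_pair scale scale ..
  fix x
  show "(v \<circ> v) x = scale a (v x)"
  proof (rule linear_eq_on[where f = "v \<circ> v" and g = "\<lambda>x. scale a (v x)"])
    show "Vector_Spaces.linear scale scale (v \<circ> v)"
      using linear_v linear_v by (rule Vector_Spaces.linear_compose)
    show "Vector_Spaces.linear scale scale (\<lambda>x. scale a (v x))"
      using linear_v by (rule linear_compose_scale_right)
    show "x \<in> span (adapted_basis ` basis_index)" using span_adapted_basis by simp
  next
    fix b assume "b \<in> adapted_basis ` basis_index"
    then obtain i where i: "i \<in> basis_index" "b = adapted_basis i" by blast
    have "v (adapted_basis (succ (fst i), 0)) = 0"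
      using v_basis[OF generator_in_basis_index] succ_second_in_basis_index
      by (simp add: correction_def)
    then show "(v \<circ> v) b = scale a (v b)"
      using v_basis[OF i(1)] unfolding i(2) correction_def by (simp add: v.diff v.scale)
  qed
qed

lemma correction_shifts_adapted_basis:
  assumes i: "i \<in> basis_index"
  shows "(u (adapted_basis i) - v (adapted_basis i)) - adapted_basis (next_index i)
         \<in> span (adapted_basis ` {j\<in>basis_index. j < next_index i})"
proof (cases "(fst i, Suc (snd i)) \<in> basis_index")
  case True
  then show ?thesis
    using v_basis[OF i] by (cases i) (simp add: correction_def next_index_def adapted_basis_def span_zero)
next
  case False
  obtain \<alpha> k where i_eq: "i = (\<alpha>, k)" by (cases i)
  have "u (adapted_basis i) - scale a (adapted_basis i) \<in> M \<alpha>"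
    using adapted_basis_in_M[of \<alpha> k] M_invariant M_subspace unfolding i_eq
    by (blast intro: subspace_diff subspace_scale)
  also have "M \<alpha> \<subseteq> span (adapted_basis ` {j\<in>basis_index. fst j \<le> \<alpha>})"
    by (rule M_subset_span_adapted_basis)
  also have "\<dots> \<subseteq> span (adapted_basis ` {j\<in>basis_index. j < next_index i})"
    using False less_succ[of \<alpha>] unfolding next_index_def i_eq
    by (intro span_mono image_mono) (auto dest: le_less_trans)
  finally show ?thesis
    using v_basis[OF i] False unfolding correction_def next_index_def by simp
qed

lemma elementary_shifted_by_correction: "elementary scale (\<lambda>x. u x - v x)"
proof (rule elementary_if_shifts_triangular_basis)
  interpret vector_space_pair scale scale ..
  show "Vector_Spaces.linear scale scale (\<lambda>x. u x - v x)"
    using linear_u linear_v by (rule linear_compose_sub)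
qed (use triangular_adapted_basis span_adapted_basis next_index_in_basis_index
      strict_mono_on_next_index less_next_index correction_shifts_adapted_basis in auto)

end

end

theorem proposition3:
  fixes scale :: "'f::field \<Rightarrow> 'v::ab_group_add \<Rightarrow> 'v"
    and u :: "'v \<Rightarrow> 'v" and a :: 'f
    and M :: "'d::wellorder \<Rightarrow> 'v set"
  assumes "vector_space scale"
    and "Vector_Spaces.linear scale scale u"
    and "stratification scale u M"
    and "property_PA scale M"
    and "property_PM M"
  shows "\<exists>v. Vector_Spaces.linear scale scale v \<and> v \<circ> v = (\<lambda>x. scale a (v x)) \<and>
             elementary scale (\<lambda>x. u x - v x)"
proof -
  interpret stratified_endomorphism_PA_PM scale u M
    using assms by (simp add: stratified_endomorphism_PA_PM_def stratified_endomorphism_def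
        stratified_endomorphism_PA_PM_axioms_def stratified_endomorphism_axioms_def)
  obtain v where v: "Vector_Spaces.linear scale scale v"
    "\<And>i. i \<in> basis_index \<Longrightarrow> v (adapted_basis i) = correction a i"
    using linear_extension_of_correction by blast
  show ?thesis using v correction_square[OF v] elementary_shifted_by_correction[OF v] by blast
qed

end
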